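(* Given a set $\mathcal{R}$ of rules on a finite set $Q$ and a subset $X\subseteq Q$, the maximum member $X^\circ$ of $\mathcal{A}(\mathcal{R})$ contained in $X$ can be computed in linear time, i.e. in time $O(l(\mathcal{R}))$.
   Context: A rule on $Q$ is a pair $(A,q)$ with $A\subseteq Q$, $q\in Q$; it accepts $Y\subseteq Q$ if $q\in Y$ implies $Y\cap A\neq\emptyset$. $\mathcal{K}(\mathcal{R})$ is the family of subsets accepted by all rules of $\mathcal{R}$, and $\mathcal{A}(\mathcal{R})$ is the family of $K\in\mathcal{K}(\mathcal{R})$ for which there is a sequence $\emptyset=Y_0\subseteq\dots\subseteq Y_k=K$ of members of $\mathcal{K}(\mathcal{R})$ with $|Y_{i+1}\setminus Y_i|=1$. $\mathcal{A}(\mathcal{R})$ is union-closed and contains $\emptyset$, so for each $X\subseteq Q$ there is a unique maximal member $X^\circ$ of $\mathcal{A}(\mathcal{R})$ contained in $X$. The input size is $l(\mathcal{R})=\sum_{(A,q)\in\mathcal{R}}(|A|+1)$, assumed to satisfy $l(\mathcal{R})\ge|Q|$. *)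

theory Defs
  imports Main
begin

type_synonym 'a rule = "'a set \<times> 'a"

definition accepts :: "'a rule \<Rightarrow> 'a set \<Rightarrow> bool" where
  "accepts r Y \<longleftrightarrow> (snd r \<in> Y \<longrightarrow> Y \<inter> fst r \<noteq> {})"

definition rule_on :: "'a set \<Rightarrow> 'a rule \<Rightarrow> bool" where
  "rule_on Q r \<longleftrightarrow> fst r \<subseteq> Q \<and> snd r \<in> Q"

definition Kfam :: "'a set \<Rightarrow> 'a rule set \<Rightarrow> 'a set set" where
  "Kfam Q R = {Y. Y \<subseteq> Q \<and> (\<forall>r\<in>R. accepts r Y)}"

definition Afam :: "'a set \<Rightarrow> 'a rule set \<Rightarrow> 'a set set" where
  "Afam Q R = {K. K \<in> Kfam Q R \<and>
     (\<exists>(Ys :: nat \<Rightarrow> 'a set) k. Ys 0 = {} \<and> Ys k = K \<and>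
        (\<forall>i\<le>k. Ys i \<in> Kfam Q R) \<and>
        (\<forall>i<k. Ys i \<subseteq> Ys (Suc i) \<and> card (Ys (Suc i) - Ys i) = 1))}"

definition interior :: "'a set \<Rightarrow> 'a rule set \<Rightarrow> 'a set \<Rightarrow> 'a set" where
  "interior Q R X = (THE Y. Y \<in> Afam Q R \<and> Y \<subseteq> X \<and>
      (\<forall>Z\<in>Afam Q R. Z \<subseteq> X \<longrightarrow> Z \<subseteq> Y))"

definition rsize :: "'a rule set \<Rightarrow> nat" where
  "rsize R = (\<Sum>r\<in>R. card (fst r) + 1)"

text \<open>The input is given as a list qs enumerating Q, a list rs of rules, each
  with its body as a list, and the set X (O(1) membership test, i.e. a bit array).
  Each machine step performs O(1) RAM operations (array reads/writes indexed by
  elements of Q or rule indices, list cons/uncons).  Running time = number of steps.\<close>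

datatype 'a phase = Init1 nat nat bool | Init2 nat | Loop | Scan "nat list" | Done

record 'a mstate =
  st_phase :: "'a phase"
  st_occ :: "'a \<Rightarrow> nat list"
  st_cnt :: "'a \<Rightarrow> nat"
  st_counted :: "nat \<Rightarrow> bool"
  st_sat :: "nat \<Rightarrow> bool"
  st_queue :: "'a list"
  st_Y :: "'a set"

definition init_state :: "'a mstate" where
  "init_state = \<lparr>st_phase = Init1 0 0 False, st_occ = (\<lambda>_. []), st_cnt = (\<lambda>_. 0),
     st_counted = (\<lambda>_. False), st_sat = (\<lambda>_. False), st_queue = [], st_Y = {}\<rparr>"

definition mstep :: "'a list \<Rightarrow> ('a list \<times> 'a) list \<Rightarrow> 'a set \<Rightarrow> 'a mstate \<Rightarrow> 'a mstate" where
  "mstep qs rs X s = (case st_phase s of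
     Init1 i j found \<Rightarrow>
       (if i < length rs then
          (let as = fst (rs ! i); q = snd (rs ! i) in
           if j < length as then
             (let a = as ! j in
              s\<lparr>st_phase := Init1 i (Suc j) (found \<or> a = q),
                st_occ := (st_occ s)(a := i # st_occ s a)\<rparr>)
           else if found then s\<lparr>st_phase := Init1 (Suc i) 0 False\<rparr>
           else s\<lparr>st_phase := Init1 (Suc i) 0 False,
                   st_cnt := (st_cnt s)(q := Suc (st_cnt s q)),
                   st_counted := (st_counted s)(i := True)\<rparr>)
        else s\<lparr>st_phase := Init2 0\<rparr>)
   | Init2 k \<Rightarrow>
       (if k < length qs then
          (let a = qs ! k in
           s\<lparr>st_phase := Init2 (Suc k),
             st_queue := (if a \<in> X \<and> st_cnt s a = 0 then a # st_queue s else st_queue s)\<rparr>)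
        else s\<lparr>st_phase := Loop\<rparr>)
   | Loop \<Rightarrow>
       (case st_queue s of
          [] \<Rightarrow> s\<lparr>st_phase := Done\<rparr>
        | p # ps \<Rightarrow>
            (if p \<in> st_Y s then s\<lparr>st_queue := ps\<rparr>
             else s\<lparr>st_queue := ps, st_Y := insert p (st_Y s), st_phase := Scan (st_occ s p)\<rparr>))
   | Scan is \<Rightarrow>
       (case is of
          [] \<Rightarrow> s\<lparr>st_phase := Loop\<rparr>
        | i # is' \<Rightarrow>
            (if st_counted s i \<and> \<not> st_sat s i then
               (let q = snd (rs ! i); c' = st_cnt s q - 1 in
                s\<lparr>st_phase := Scan is', st_sat := (st_sat s)(i := True),
                  st_cnt := (st_cnt s)(q := c'),
                  st_queue := (if c' = 0 \<and> q \<in> X \<and> q \<notin> st_Y s then q # st_queue s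
                               else st_queue s)\<rparr>)
             else s\<lparr>st_phase := Scan is'\<rparr>))
   | Done \<Rightarrow> s)"

definition run :: "'a list \<Rightarrow> ('a list \<times> 'a) list \<Rightarrow> 'a set \<Rightarrow> nat \<Rightarrow> 'a mstate" where
  "run qs rs X n = (mstep qs rs X ^^ n) init_state"

definition rules_of :: "('a list \<times> 'a) list \<Rightarrow> 'a rule set" where
  "rules_of rs = (\<lambda>(as, q). (set as, q)) ` set rs"

end

theory Submission
  imports Defs
begin

text \<open>The machine is the forward-chaining algorithm for Horn-like rules.  A rule
  \<open>(A, q)\<close> with \<open>q \<notin> A\<close> is pending as long as \<open>A\<close> misses the current set \<open>Y\<close>;
  for every \<open>q\<close> a counter records the pending rules with head \<open>q\<close>, and \<open>q \<in> X\<close> is queued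
  as soon as its counter is zero, i.e.\ as soon as \<open>insert q Y\<close> is accepted by all rules.
  Thus \<open>Y\<close> grows inside \<open>A(R)\<close> one element at a time.  When the queue is empty, every
  \<open>z \<in> X - Y\<close> is the head of a pending rule, and such a rule forbids any chain of
  \<open>A(R)\<close> inside \<open>X\<close> from ever leaving \<open>Y\<close>; hence \<open>Y = X\<degree>\<close>.  Every element enters \<open>Y\<close>
  at most once, its occurrence list is then scanned once, and every rule becomes
  non-pending at most once, so the number of steps is linear in \<open>l(R)\<close>.\<close>

section \<open>Accessible families\<close>

lemma empty_in_Afam: "{} \<in> Afam Q R"
  unfolding Afam_def Kfam_def accepts_def
  by (auto intro!: exI[of _ "\<lambda>_. {}"] exI[of _ 0])

lemma insert_in_Afam:
  assumes "Y \<in> Afam Q R" "insert p Y \<in> Kfam Q R" "p \<notin> Y"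
  shows "insert p Y \<in> Afam Q R"
proof -
  from assms(1) obtain Ys k where c: "Ys 0 = {}" "Ys k = Y" "\<forall>i\<le>k. Ys i \<in> Kfam Q R"
    "\<forall>i<k. Ys i \<subseteq> Ys (Suc i) \<and> card (Ys (Suc i) - Ys i) = 1"
    unfolding Afam_def by blast
  define Zs where "Zs = (\<lambda>i. if i \<le> k then Ys i else insert p Y)"
  have "Zs 0 = {}" "Zs (Suc k) = insert p Y" using c by (auto simp: Zs_def)
  moreover have "\<forall>i\<le>Suc k. Zs i \<in> Kfam Q R" using c assms(2) by (auto simp: Zs_def le_Suc_eq)
  moreover have "\<forall>i<Suc k. Zs i \<subseteq> Zs (Suc i) \<and> card (Zs (Suc i) - Zs i) = 1"
  proof (intro allI impI)
    fix i assume "i < Suc k"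
    then consider "i < k" | "i = k" by linarith
    then show "Zs i \<subseteq> Zs (Suc i) \<and> card (Zs (Suc i) - Zs i) = 1"
    proof cases
      case 1 then show ?thesis using c by (auto simp: Zs_def)
    next
      case 2
      have "insert p Y - Y = {p}" using assms(3) by auto
      then show ?thesis using 2 c by (auto simp: Zs_def)
    qed
  qed
  ultimately show ?thesis using assms(2) unfolding Afam_def by blast
qed

text \<open>A rule \<open>(A, z)\<close> with \<open>z \<notin> A\<close> and \<open>A \<inter> Y = {}\<close> rejects every superset of \<open>Y\<close> that
  adds \<open>z\<close> alone, so no single-element chain starting inside \<open>Y\<close> can reach \<open>z\<close>.\<close>

lemma Afam_subset_if_blocked:
  assumes ZA: "Z \<in> Afam Q R" and ZX: "Z \<subseteq> X"
    and blocked: "\<forall>z\<in>X - Y. \<exists>A. (A, z) \<in> R \<and> z \<notin> A \<and> A \<inter> Y = {}"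
  shows "Z \<subseteq> Y"
proof -
  from ZA obtain Ys k where c: "Ys 0 = {}" "Ys k = Z" "\<forall>i\<le>k. Ys i \<in> Kfam Q R"
    "\<forall>i<k. Ys i \<subseteq> Ys (Suc i) \<and> card (Ys (Suc i) - Ys i) = 1"
    unfolding Afam_def by blast
  have mono: "Ys j \<subseteq> Ys k" if "j \<le> k" for j
    using that
  proof (induction j rule: inc_induct)
    case (step n) then show ?case using c(4) by blast
  qed simp
  have "Ys j \<subseteq> Y" if "j \<le> k" for j
    using that
  proof (induction j)
    case 0 then show ?case using c by simp
  next
    case (Suc j)
    then have jk: "j < k" and IH: "Ys j \<subseteq> Y" by simp_all
    from jk c(4) obtain z where "Ys (Suc j) - Ys j = {z}" "Ys j \<subseteq> Ys (Suc j)"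
      by (auto simp: card_Suc_eq)
    then have eq: "Ys (Suc j) = insert z (Ys j)" by blast
    show ?case
    proof (rule ccontr)
      assume "\<not> Ys (Suc j) \<subseteq> Y"
      then have "z \<notin> Y" using eq IH by auto
      moreover have "z \<in> X" using mono[of "Suc j"] jk c(2) ZX eq by auto
      ultimately obtain A where A: "(A, z) \<in> R" "z \<notin> A" "A \<inter> Y = {}" using blocked by blast
      have "accepts (A, z) (Ys (Suc j))" using A(1) c(3) jk unfolding Kfam_def by auto
      then show False using A IH eq unfolding accepts_def by auto
    qed
  qed
  then show ?thesis using c(2) by blast
qed

lemma interior_eqI:
  assumes "Y \<in> Afam Q R" "Y \<subseteq> X"
    and "\<forall>z\<in>X - Y. \<exists>A. (A, z) \<in> R \<and> z \<notin> A \<and> A \<inter> Y = {}"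
  shows "interior Q R X = Y"
proof -
  have max: "Z \<subseteq> Y" if "Z \<in> Afam Q R" "Z \<subseteq> X" for Z
    using Afam_subset_if_blocked[OF that assms(3)] .
  show ?thesis
    unfolding interior_def
    proof (rule the_equality)
    show "Y \<in> Afam Q R \<and> Y \<subseteq> X \<and> (\<forall>Z\<in>Afam Q R. Z \<subseteq> X \<longrightarrow> Z \<subseteq> Y)"
      using assms(1,2) max by blast
    show "Y' = Y" if "Y' \<in> Afam Q R \<and> Y' \<subseteq> X \<and> (\<forall>Z\<in>Afam Q R. Z \<subseteq> X \<longrightarrow> Z \<subseteq> Y')" for Y'
      using that assms(1,2) max by (simp add: subset_antisym)
  qed
qed

section \<open>The initialisation phase\<close>

locale rule_machine =
  fixes qs :: "'a list" and rs :: "('a list \<times> 'a) list" and X :: "'a set"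
  assumes distinct_qs: "distinct qs"
    and distinct_bodies: "\<forall>(as, q) \<in> set rs. distinct as"
    and distinct_rules: "distinct (map (\<lambda>(as, q). (set as, q)) rs)"
    and X_subset: "X \<subseteq> set qs"
begin

abbreviation step :: "'a mstate \<Rightarrow> 'a mstate" where
  "step \<equiv> mstep qs rs X"

definition body :: "nat \<Rightarrow> 'a set" where
  "body k = set (fst (rs ! k))"

definition head :: "nat \<Rightarrow> 'a" where
  "head k = snd (rs ! k)"

definition occ_upto :: "nat \<Rightarrow> 'a \<Rightarrow> nat list" where
  "occ_upto i a = rev (filter (\<lambda>k. a \<in> body k) [0..<i])"

text \<open>A rule whose head lies in its body accepts every set; the machine never counts it.\<close>

definition counted_upto :: "nat \<Rightarrow> nat \<Rightarrow> bool" where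
  "counted_upto i k \<longleftrightarrow> k < i \<and> head k \<notin> body k"

definition cnt_upto :: "nat \<Rightarrow> 'a \<Rightarrow> nat" where
  "cnt_upto i q = card {k. counted_upto i k \<and> head k = q}"

definition init1_state :: "nat \<Rightarrow> nat \<Rightarrow> 'a mstate" where
  "init1_state i j = \<lparr>st_phase = Init1 i j (snd (rs ! i) \<in> set (take j (fst (rs ! i)))),
     st_occ = (\<lambda>a. (if a \<in> set (take j (fst (rs ! i))) then [i] else []) @ occ_upto i a),
     st_cnt = cnt_upto i, st_counted = counted_upto i, st_sat = (\<lambda>_. False),
     st_queue = [], st_Y = {}\<rparr>"

lemma distinct_body_list: "i < length rs \<Longrightarrow> distinct (fst (rs ! i))"
  using distinct_bodies nth_mem by (cases "rs ! i") fastforce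

lemma init_state_eq: "init_state = init1_state 0 0"
  by (simp add: init_state_def init1_state_def occ_upto_def cnt_upto_def counted_upto_def
      fun_eq_iff)

lemma step_init1_inner:
  assumes "i < length rs" "j < length (fst (rs ! i))"
  shows "step (init1_state i j) = init1_state i (Suc j)"
proof -
  have "fst (rs ! i) ! j \<notin> set (take j (fst (rs ! i)))"
    using distinct_body_list[OF assms(1)] assms(2)
    by (simp add: in_set_conv_nth nth_eq_iff_index_eq)
  moreover have "take (Suc j) (fst (rs ! i)) = take j (fst (rs ! i)) @ [fst (rs ! i) ! j]"
    using assms(2) by (simp add: take_Suc_conv_app_nth)
  ultimately show ?thesis
    using assms unfolding init1_state_def mstep_def by (auto simp: Let_def fun_eq_iff)
qed

lemma step_init1_outer:
  assumes "i < length rs"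
  shows "step (init1_state i (length (fst (rs ! i)))) = init1_state (Suc i) 0"
proof -
  have occ: "occ_upto (Suc i) a = (if a \<in> body i then [i] else []) @ occ_upto i a" for a
    by (simp add: occ_upto_def)
  have counted: "counted_upto (Suc i) =
      (if head i \<in> body i then counted_upto i else (counted_upto i)(i := True))"
    by (auto simp: counted_upto_def fun_eq_iff less_Suc_eq)
  have cnt: "cnt_upto (Suc i) = (if head i \<in> body i then cnt_upto i
      else (cnt_upto i)(head i := Suc (cnt_upto i (head i))))"
  proof -
    have "{k. counted_upto (Suc i) k \<and> head k = q} =
      (if head i = q \<and> q \<notin> body i then insert i else id) {k. counted_upto i k \<and> head k = q}"
      for q by (auto simp: counted_upto_def less_Suc_eq)
    then show ?thesis by (auto simp: cnt_upto_def fun_eq_iff counted_upto_def)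
  qed
  show ?thesis
    using assms unfolding init1_state_def mstep_def
    by (auto simp: Let_def occ cnt counted fun_eq_iff body_def head_def)
qed

definition init1_steps :: "nat \<Rightarrow> nat" where
  "init1_steps i = (\<Sum>k<i. length (fst (rs ! k)) + 1)"

lemma run_init1: "i \<le> length rs \<Longrightarrow> (step ^^ init1_steps i) init_state = init1_state i 0"
proof (induction i)
  case 0 then show ?case by (simp add: init1_steps_def init_state_eq)
next
  case (Suc i)
  then have i: "i < length rs" by simp
  have inner: "(step ^^ j) (init1_state i 0) = init1_state i j"
    if "j \<le> length (fst (rs ! i))" for j
    using that by (induction j) (simp_all add: step_init1_inner[OF i])
  have "init1_steps (Suc i) = Suc (length (fst (rs ! i))) + init1_steps i"
    by (simp add: init1_steps_def)
  then show ?case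
    using Suc i by (simp add: funpow_add inner step_init1_outer)
qed

definition init2_state :: "nat \<Rightarrow> 'a mstate" where
  "init2_state k = \<lparr>st_phase = Init2 k, st_occ = occ_upto (length rs),
     st_cnt = cnt_upto (length rs), st_counted = counted_upto (length rs),
     st_sat = (\<lambda>_. False),
     st_queue = rev (filter (\<lambda>a. a \<in> X \<and> cnt_upto (length rs) a = 0) (take k qs)),
     st_Y = {}\<rparr>"

definition loop_start :: "'a mstate" where
  "loop_start = \<lparr>st_phase = Loop, st_occ = occ_upto (length rs),
     st_cnt = cnt_upto (length rs), st_counted = counted_upto (length rs),
     st_sat = (\<lambda>_. False),
     st_queue = rev (filter (\<lambda>a. a \<in> X \<and> cnt_upto (length rs) a = 0) qs), st_Y = {}\<rparr>"

lemma run_init2: "k \<le> length qs \<Longrightarrow> (step ^^ k) (init2_state 0) = init2_state k"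
  by (induction k) (auto simp: init2_state_def mstep_def Let_def take_Suc_conv_app_nth)

lemma run_loop_start:
  "run qs rs X (init1_steps (length rs) + length qs + 2) = loop_start"
proof -
  have "run qs rs X (init1_steps (length rs) + length qs + 2) =
     step ((step ^^ length qs) (step ((step ^^ init1_steps (length rs)) init_state)))"
  proof -
    have "init1_steps (length rs) + length qs + 2 = Suc (length qs + Suc (init1_steps (length rs)))"
      by simp
    then show ?thesis unfolding run_def by (simp only: funpow.simps(2) funpow_add comp_def)
  qed
  also have "\<dots> = loop_start"
  proof -
    have "step (init1_state (length rs) 0) = init2_state 0"
      by (simp add: init1_state_def init2_state_def mstep_def)
    moreover have "step (init2_state (length qs)) = loop_start"
      by (simp add: init2_state_def loop_start_def mstep_def)
    ultimately show ?thesis by (simp add: run_init1 run_init2)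
  qed
  finally show ?thesis .
qed

section \<open>The main loop\<close>

abbreviation occ :: "'a \<Rightarrow> nat list" where
  "occ \<equiv> occ_upto (length rs)"

abbreviation counted :: "nat \<Rightarrow> bool" where
  "counted \<equiv> counted_upto (length rs)"

lemma set_occ: "set (occ p) = {k. k < length rs \<and> p \<in> body k}"
  by (auto simp: occ_upto_def)

lemma counted_less: "counted k \<Longrightarrow> k < length rs"
  by (simp add: counted_upto_def)

lemma finite_counted: "finite {k. counted k \<and> P k}"
  by (rule finite_subset[of _ "{..<length rs}"]) (auto simp: counted_upto_def)

lemma rules_of_conv: "rules_of rs = (\<lambda>k. (body k, head k)) ` {..<length rs}"
proof -
  have "set rs = (\<lambda>k. rs ! k) ` {..<length rs}" by (auto simp: set_conv_nth)
  then show ?thesis by (simp add: rules_of_def body_def head_def image_image case_prod_beta)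
qed

definition loop_inv :: "'a mstate \<Rightarrow> bool" where
  "loop_inv s \<longleftrightarrow>
    (st_phase s = Loop \<or> (\<exists>is. st_phase s = Scan is)) \<and>
    st_occ s = occ \<and> st_counted s = counted \<and>
    (\<forall>k. st_sat s k \<longrightarrow> counted k \<and> body k \<inter> st_Y s \<noteq> {}) \<and>
    (\<forall>q. st_cnt s q = card {k. counted k \<and> \<not> st_sat s k \<and> head k = q}) \<and>
    (\<forall>k. counted k \<and> body k \<inter> st_Y s \<noteq> {} \<longrightarrow>
       st_sat s k \<or> (\<exists>is. st_phase s = Scan is \<and> k \<in> set is)) \<and>
    (\<forall>is. st_phase s = Scan is \<longrightarrow> (\<forall>k\<in>set is. k < length rs \<and> body k \<inter> st_Y s \<noteq> {})) \<and>
    (\<forall>x. x \<in> X \<and> x \<notin> st_Y s \<and> st_cnt s x = 0 \<longrightarrow> x \<in> set (st_queue s)) \<and>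
    (\<forall>x \<in> set (st_queue s). x \<in> X \<and> st_cnt s x = 0) \<and>
    st_Y s \<subseteq> X \<and> st_Y s \<in> Afam (set qs) (rules_of rs)"

lemma loop_invD:
  assumes "loop_inv s"
  shows "st_phase s = Loop \<or> (\<exists>is. st_phase s = Scan is)" "st_occ s = occ"
    "st_counted s = counted"
    "\<And>k. st_sat s k \<Longrightarrow> counted k" "\<And>k. st_sat s k \<Longrightarrow> body k \<inter> st_Y s \<noteq> {}"
    "\<And>q. st_cnt s q = card {k. counted k \<and> \<not> st_sat s k \<and> head k = q}"
    "\<And>k. counted k \<Longrightarrow> body k \<inter> st_Y s \<noteq> {} \<Longrightarrow>
       st_sat s k \<or> (\<exists>is. st_phase s = Scan is \<and> k \<in> set is)"
    "\<And>is k. st_phase s = Scan is \<Longrightarrow> k \<in> set is \<Longrightarrow> k < length rs"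
    "\<And>is k. st_phase s = Scan is \<Longrightarrow> k \<in> set is \<Longrightarrow> body k \<inter> st_Y s \<noteq> {}"
    "\<And>x. x \<in> X \<Longrightarrow> x \<notin> st_Y s \<Longrightarrow> st_cnt s x = 0 \<Longrightarrow> x \<in> set (st_queue s)"
    "\<And>x. x \<in> set (st_queue s) \<Longrightarrow> x \<in> X"
    "\<And>x. x \<in> set (st_queue s) \<Longrightarrow> st_cnt s x = 0"
    "st_Y s \<subseteq> X" "st_Y s \<in> Afam (set qs) (rules_of rs)"
  using assms unfolding loop_inv_def by blast+

lemma loop_invI:
  assumes "st_phase s = Loop \<or> (\<exists>is. st_phase s = Scan is)" "st_occ s = occ"
    "st_counted s = counted"
    "\<And>k. st_sat s k \<Longrightarrow> counted k" "\<And>k. st_sat s k \<Longrightarrow> body k \<inter> st_Y s \<noteq> {}"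
    "\<And>q. st_cnt s q = card {k. counted k \<and> \<not> st_sat s k \<and> head k = q}"
    "\<And>k. counted k \<Longrightarrow> body k \<inter> st_Y s \<noteq> {} \<Longrightarrow>
       st_sat s k \<or> (\<exists>is. st_phase s = Scan is \<and> k \<in> set is)"
    "\<And>is k. st_phase s = Scan is \<Longrightarrow> k \<in> set is \<Longrightarrow> k < length rs"
    "\<And>is k. st_phase s = Scan is \<Longrightarrow> k \<in> set is \<Longrightarrow> body k \<inter> st_Y s \<noteq> {}"
    "\<And>x. x \<in> X \<Longrightarrow> x \<notin> st_Y s \<Longrightarrow> st_cnt s x = 0 \<Longrightarrow> x \<in> set (st_queue s)"
    "\<And>x. x \<in> set (st_queue s) \<Longrightarrow> x \<in> X"
    "\<And>x. x \<in> set (st_queue s) \<Longrightarrow> st_cnt s x = 0"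
    "st_Y s \<subseteq> X" "st_Y s \<in> Afam (set qs) (rules_of rs)"
  shows "loop_inv s"
  using assms unfolding loop_inv_def by blast

lemma loop_inv_loop_start: "loop_inv loop_start"
proof (rule loop_invI, simp_all add: loop_start_def empty_in_Afam)
  show "cnt_upto (length rs) q = card {k. counted k \<and> head k = q}" for q
    by (simp add: cnt_upto_def)
  show "x \<in> set qs" if "x \<in> X" for x using that X_subset by auto
qed

text \<open>The sum pays for scanning the occurrence list of each element not yet added.\<close>

definition potential :: "'a mstate \<Rightarrow> nat" where
  "potential s = 1 + length (st_queue s) + card {k. counted k \<and> \<not> st_sat s k}
    + (\<Sum>a\<in>set qs - st_Y s. length (occ a) + 1)
    + (case st_phase s of Scan is \<Rightarrow> length is + 1 | _ \<Rightarrow> 0)"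

lemma step_loop_skip:
  assumes I: "loop_inv s" and ph: "st_phase s = Loop"
    and qu: "st_queue s = p # ps" and pY: "p \<in> st_Y s"
  shows "loop_inv (step s) \<and> potential (step s) < potential s"
proof -
  note D = loop_invD[OF I]
  have s': "step s = s\<lparr>st_queue := ps\<rparr>" using ph qu pY by (simp add: mstep_def)
  have "loop_inv (step s)" unfolding s'
  proof (rule loop_invI, simp_all add: ph)
    show "x \<in> set ps" if "x \<in> X" "x \<notin> st_Y s" "st_cnt s x = 0" for x
      using D(10)[OF that] qu that(2) pY by auto
    show "st_sat s k" if "counted k" "body k \<inter> st_Y s \<noteq> {}" for k
      using D(7)[OF that] ph by simp
    show "x \<in> X" "st_cnt s x = 0" if "x \<in> set ps" for x
      using D(11,12)[of x] that qu by auto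
  qed (rule D; assumption)+
  moreover have "potential (step s) < potential s" unfolding s' potential_def using qu by simp
  ultimately show ?thesis by simp
qed

text \<open>A queued element has counter zero: every rule with that head either contains it
  or is already satisfied, so adding it keeps all rules accepting.\<close>

lemma insert_queued_in_Kfam:
  assumes I: "loop_inv s" and p: "p \<in> set (st_queue s)"
  shows "insert p (st_Y s) \<in> Kfam (set qs) (rules_of rs)"
proof -
  note D = loop_invD[OF I]
  have pX: "p \<in> X" and cnt: "st_cnt s p = 0" using D(11,12) p by auto
  have YK: "st_Y s \<in> Kfam (set qs) (rules_of rs)" using D(14) by (auto simp: Afam_def)
  have "accepts (body k, head k) (insert p (st_Y s))" if k: "k < length rs" for k
  proof (cases "head k = p")
    case hp: True
    show ?thesis
    proof (cases "counted k")
      case True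
      have "card {k. counted k \<and> \<not> st_sat s k \<and> head k = p} = 0" using D(6)[of p] cnt by simp
      then have "st_sat s k"
        using True hp finite_counted[of "\<lambda>k. \<not> st_sat s k \<and> head k = p"] by auto
      then show ?thesis using D(5) by (auto simp: accepts_def)
    next
      case False
      then have "p \<in> body k" using k hp by (simp add: counted_upto_def)
      then show ?thesis by (auto simp: accepts_def)
    qed
  next
    case False
    have "accepts (body k, head k) (st_Y s)"
      using YK k unfolding Kfam_def rules_of_conv by blast
    then show ?thesis using False unfolding accepts_def by auto
  qed
  moreover have "insert p (st_Y s) \<subseteq> set qs" using D(13) pX X_subset by auto
  ultimately have "insert p (st_Y s) \<subseteq> set qs \<and>
      (\<forall>r\<in>(\<lambda>k. (body k, head k)) ` {..<length rs}. accepts r (insert p (st_Y s)))"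
    by blast
  then show ?thesis unfolding Kfam_def rules_of_conv by blast
qed

lemma step_loop_add:
  assumes I: "loop_inv s" and ph: "st_phase s = Loop"
    and qu: "st_queue s = p # ps" and pY: "p \<notin> st_Y s"
  shows "loop_inv (step s) \<and> potential (step s) < potential s"
proof -
  note D = loop_invD[OF I]
  have s': "step s = s\<lparr>st_queue := ps, st_Y := insert p (st_Y s), st_phase := Scan (occ p)\<rparr>"
    using ph qu pY D(2) by (simp add: mstep_def)
  have sel: "st_phase (step s) = Scan (occ p)" "st_queue (step s) = ps"
    "st_Y (step s) = insert p (st_Y s)" "st_occ (step s) = st_occ s"
    "st_counted (step s) = st_counted s" "st_sat (step s) = st_sat s"
    "st_cnt (step s) = st_cnt s"
    by (simp_all add: s')
  have pX: "p \<in> X" using D(11) qu by simp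
  have AF: "insert p (st_Y s) \<in> Afam (set qs) (rules_of rs)"
    using insert_in_Afam[OF D(14) insert_queued_in_Kfam[OF I] pY] qu by simp
  have "loop_inv (step s)"
  proof (rule loop_invI, simp_all only: sel)
    show "Scan (occ p) = Loop \<or> (\<exists>is. Scan (occ p) = Scan is)" by simp
    show "body k \<inter> insert p (st_Y s) \<noteq> {}" if "st_sat s k" for k using D(5)[OF that] by blast
    show "st_sat s k \<or> (\<exists>is. Scan (occ p) = Scan is \<and> k \<in> set is)"
      if "counted k" "body k \<inter> insert p (st_Y s) \<noteq> {}" for k
    proof (cases "p \<in> body k")
      case True then show ?thesis using counted_less[OF that(1)] by (simp add: set_occ)
    next
      case False then have "body k \<inter> st_Y s \<noteq> {}" using that(2) by blast
      then show ?thesis using D(7)[OF that(1)] ph by simp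
    qed
    show "k < length rs" if "Scan (occ p) = Scan js" "k \<in> set js" for js k
      using that set_occ[of p] by auto
    show "body k \<inter> insert p (st_Y s) \<noteq> {}" if "Scan (occ p) = Scan js" "k \<in> set js" for js k
      using that set_occ[of p] by auto
    show "x \<in> set ps" if "x \<in> X" "x \<notin> insert p (st_Y s)" "st_cnt s x = 0" for x
      using D(10)[of x] that qu by auto
    show "x \<in> X" "st_cnt s x = 0" if "x \<in> set ps" for x
      using D(11,12)[of x] that qu by auto
    show "insert p (st_Y s) \<subseteq> X" using D(13) pX by blast
    show "insert p (st_Y s) \<in> Afam (set qs) (rules_of rs)" by (rule AF)
  qed (rule D; assumption)+
  moreover have "potential (step s) < potential s"
  proof -
    have "p \<in> set qs - st_Y s" using pX pY X_subset by auto
    moreover have "set qs - insert p (st_Y s) = (set qs - st_Y s) - {p}" by auto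
    ultimately have "(\<Sum>a\<in>set qs - st_Y s. length (occ a) + 1) =
        length (occ p) + 1 + (\<Sum>a\<in>set qs - insert p (st_Y s). length (occ a) + 1)"
      by (simp add: sum.remove)
    then show ?thesis unfolding potential_def sel using ph qu by simp
  qed
  ultimately show ?thesis by simp
qed

lemma pending_count_mark_satisfied:
  assumes I: "loop_inv s" and pending: "counted i" "\<not> st_sat s i"
  shows "st_cnt s (head i) \<ge> 1"
    and "card {k. counted k \<and> \<not> ((st_sat s)(i := True)) k \<and> head k = q} =
      ((st_cnt s)(head i := st_cnt s (head i) - 1)) q"
proof -
  note D = loop_invD[OF I]
  define S where "S = {k. counted k \<and> \<not> st_sat s k \<and> head k = head i}"
  have S: "finite S" "i \<in> S" "st_cnt s (head i) = card S"
    using finite_counted pending D(6)[of "head i"] by (simp_all add: S_def)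
  then show "st_cnt s (head i) \<ge> 1" by (metis One_nat_def Suc_leI card_gt_0_iff empty_iff)
  show "card {k. counted k \<and> \<not> ((st_sat s)(i := True)) k \<and> head k = q} =
      ((st_cnt s)(head i := st_cnt s (head i) - 1)) q"
  proof (cases "q = head i")
    case True
    then have "{k. counted k \<and> \<not> ((st_sat s)(i := True)) k \<and> head k = q} = S - {i}"
      by (auto simp: S_def)
    then show ?thesis using True S by simp
  next
    case False
    then have "{k. counted k \<and> \<not> ((st_sat s)(i := True)) k \<and> head k = q} =
        {k. counted k \<and> \<not> st_sat s k \<and> head k = q}"
      by auto
    then show ?thesis using False D(6)[of q] by simp
  qed
qed

lemma step_scan_satisfy:
  assumes I: "loop_inv s" and ph: "st_phase s = Scan (i # is)"
    and pending: "counted i" "\<not> st_sat s i"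
  shows "loop_inv (step s) \<and> potential (step s) < potential s"
proof -
  note D = loop_invD[OF I]
  define q where "q = head i"
  define c' where "c' = st_cnt s q - 1"
  define Q' where "Q' = (if c' = 0 \<and> q \<in> X \<and> q \<notin> st_Y s then q # st_queue s else st_queue s)"
  have s': "step s = s\<lparr>st_phase := Scan is, st_sat := (st_sat s)(i := True),
      st_cnt := (st_cnt s)(q := c'), st_queue := Q'\<rparr>"
    using ph pending D(3) by (simp add: mstep_def Let_def q_def c'_def head_def Q'_def)
  have sel: "st_phase (step s) = Scan is" "st_queue (step s) = Q'" "st_Y (step s) = st_Y s"
    "st_occ (step s) = st_occ s" "st_counted (step s) = st_counted s"
    "st_sat (step s) = (st_sat s)(i := True)" "st_cnt (step s) = (st_cnt s)(q := c')"
    by (simp_all add: s')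
  have cq: "st_cnt s q \<ge> 1" and cnt': "((st_cnt s)(q := c')) q' =
      card {k. counted k \<and> \<not> ((st_sat s)(i := True)) k \<and> head k = q'}" for q'
    using pending_count_mark_satisfied[OF I pending] by (simp_all add: q_def c'_def)
  have hit: "body i \<inter> st_Y s \<noteq> {}" using D(9)[OF ph] by simp
  have "loop_inv (step s)"
  proof (rule loop_invI, simp_all only: sel)
    show "Scan is = Loop \<or> (\<exists>js. Scan is = Scan js)" by simp
    show "counted k" "body k \<inter> st_Y s \<noteq> {}" if "((st_sat s)(i := True)) k" for k
      using that D(4,5) pending hit by (cases "k = i"; auto)+
    show "((st_cnt s)(q := c')) q' =
        card {k. counted k \<and> \<not> ((st_sat s)(i := True)) k \<and> head k = q'}" for q'
      by (rule cnt')
    show "((st_sat s)(i := True)) k \<or> (\<exists>js. Scan is = Scan js \<and> k \<in> set js)"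
      if "counted k" "body k \<inter> st_Y s \<noteq> {}" for k
      using D(7)[OF that] ph by auto
    show "k < length rs" "body k \<inter> st_Y s \<noteq> {}" if "Scan is = Scan js" "k \<in> set js" for js k
      using that D(8,9)[OF ph] by auto
    show "x \<in> set Q'" if "x \<in> X" "x \<notin> st_Y s" "((st_cnt s)(q := c')) x = 0" for x
      using that D(10)[of x] by (cases "x = q") (auto simp: Q'_def)
    show "x \<in> X" if "x \<in> set Q'" for x
      using that D(11)[of x] by (auto simp: Q'_def split: if_splits)
    show "((st_cnt s)(q := c')) x = 0" if "x \<in> set Q'" for x
      using that D(12)[of x] cq by (cases "x = q") (auto simp: Q'_def split: if_splits)
  qed (rule D; assumption)+
  moreover have "potential (step s) < potential s"
  proof -
    have "{k. counted k \<and> \<not> ((st_sat s)(i := True)) k} = {k. counted k \<and> \<not> st_sat s k} - {i}"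
      by auto
    moreover have "Suc (card ({k. counted k \<and> \<not> st_sat s k} - {i})) =
        card {k. counted k \<and> \<not> st_sat s k}"
      using finite_counted pending by (intro card_Suc_Diff1) simp_all
    ultimately have "card {k. counted k \<and> \<not> ((st_sat s)(i := True)) k} + 1 =
        card {k. counted k \<and> \<not> st_sat s k}"
      by simp
    moreover have "length Q' \<le> length (st_queue s) + 1" by (simp add: Q'_def)
    ultimately show ?thesis unfolding potential_def sel using ph by simp
  qed
  ultimately show ?thesis by simp
qed

lemma step_scan_skip:
  assumes I: "loop_inv s" and ph: "st_phase s = Scan (i # is)"
    and not_pending: "\<not> (counted i \<and> \<not> st_sat s i)"
  shows "loop_inv (step s) \<and> potential (step s) < potential s"
proof -
  note D = loop_invD[OF I]
  have s': "step s = s\<lparr>st_phase := Scan is\<rparr>"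
    using ph not_pending D(3) by (auto simp: mstep_def)
  have sel: "st_phase (step s) = Scan is" "st_queue (step s) = st_queue s"
    "st_Y (step s) = st_Y s" "st_occ (step s) = st_occ s" "st_counted (step s) = st_counted s"
    "st_sat (step s) = st_sat s" "st_cnt (step s) = st_cnt s"
    by (simp_all add: s')
  have "loop_inv (step s)"
  proof (rule loop_invI, simp_all only: sel)
    show "Scan is = Loop \<or> (\<exists>js. Scan is = Scan js)" by simp
    show "st_sat s k \<or> (\<exists>js. Scan is = Scan js \<and> k \<in> set js)"
      if "counted k" "body k \<inter> st_Y s \<noteq> {}" for k
      using D(7)[OF that] ph not_pending that(1) by auto
    show "k < length rs" "body k \<inter> st_Y s \<noteq> {}" if "Scan is = Scan js" "k \<in> set js" for js k
      using that D(8,9)[OF ph] by auto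
  qed (rule D; assumption)+
  moreover have "potential (step s) < potential s" unfolding potential_def s' using ph by simp
  ultimately show ?thesis by simp
qed

lemma step_scan_end:
  assumes I: "loop_inv s" and ph: "st_phase s = Scan []"
  shows "loop_inv (step s) \<and> potential (step s) < potential s"
proof -
  note D = loop_invD[OF I]
  have s': "step s = s\<lparr>st_phase := Loop\<rparr>" using ph by (simp add: mstep_def)
  have "loop_inv (step s)" unfolding s'
  proof (rule loop_invI, simp_all)
    show "st_sat s k" if "counted k" "body k \<inter> st_Y s \<noteq> {}" for k
      using D(7)[OF that] ph by auto
  qed (use D in auto)
  moreover have "potential (step s) < potential s" unfolding potential_def s' using ph by simp
  ultimately show ?thesis by simp
qed

lemma step_progress_unless_finished:
  assumes I: "loop_inv s"
  shows "(st_phase s = Loop \<and> st_queue s = []) \<or>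
    (loop_inv (step s) \<and> potential (step s) < potential s)"
proof -
  consider "st_phase s = Loop" | js where "st_phase s = Scan js"
    using loop_invD(1)[OF I] by blast
  then show ?thesis
  proof cases
    case 1
    then show ?thesis
      using step_loop_skip[OF I 1] step_loop_add[OF I 1] by (cases "st_queue s") auto
  next
    case (2 js)
    then show ?thesis
      using step_scan_end[OF I] step_scan_satisfy[OF I] step_scan_skip[OF I]
      by (cases js) auto
  qed
qed

text \<open>With an empty queue every \<open>z \<in> X - Y\<close> has a nonzero counter, i.e.\ it is the head
  of a pending rule, which blocks it in the sense of \<open>interior_eqI\<close>.\<close>

lemma step_loop_finish:
  assumes I: "loop_inv s" and ph: "st_phase s = Loop" and qu: "st_queue s = []"
  shows "st_phase (step s) = Done \<and> st_Y (step s) = interior (set qs) (rules_of rs) X"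
proof -
  note D = loop_invD[OF I]
  have s': "step s = s\<lparr>st_phase := Done\<rparr>" using ph qu by (simp add: mstep_def)
  have "\<exists>A. (A, z) \<in> rules_of rs \<and> z \<notin> A \<and> A \<inter> st_Y s = {}" if z: "z \<in> X - st_Y s" for z
  proof -
    have "card {k. counted k \<and> \<not> st_sat s k \<and> head k = z} \<noteq> 0"
      using D(10)[of z] D(6)[of z] z qu by auto
    then obtain k where k: "counted k" "\<not> st_sat s k" "head k = z"
      by (metis (mono_tags, lifting) card.empty empty_Collect_eq)
    have "body k \<inter> st_Y s = {}" using D(7)[OF k(1)] k(2) ph by auto
    moreover have "(body k, z) \<in> rules_of rs"
      using counted_less[OF k(1)] k(3) unfolding rules_of_conv by blast
    moreover have "z \<notin> body k" using k(1,3) by (simp add: counted_upto_def)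
    ultimately show ?thesis by blast
  qed
  then have "interior (set qs) (rules_of rs) X = st_Y s"
    using interior_eqI[OF D(14,13)] by blast
  then show ?thesis by (simp add: s')
qed

lemma loop_terminates:
  "loop_inv s \<Longrightarrow> \<exists>n \<le> potential s. st_phase ((step ^^ n) s) = Done \<and>
     st_Y ((step ^^ n) s) = interior (set qs) (rules_of rs) X"
proof (induction "potential s" arbitrary: s rule: less_induct)
  case less
  from step_progress_unless_finished[OF less.prems] show ?case
  proof
    assume "st_phase s = Loop \<and> st_queue s = []"
    then show ?case
      using step_loop_finish[OF less.prems] by (intro exI[of _ 1]) (simp add: potential_def)
  next
    assume progress: "loop_inv (step s) \<and> potential (step s) < potential s"
    then obtain n where "n \<le> potential (step s)" "st_phase ((step ^^ n) (step s)) = Done"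
      "st_Y ((step ^^ n) (step s)) = interior (set qs) (rules_of rs) X"
      using less.hyps by blast
    then show ?case
      using progress by (intro exI[of _ "Suc n"]) (simp add: funpow_Suc_right del: funpow.simps)
  qed
qed

section \<open>The running time\<close>

lemma sum_length_occ_upto_le:
  "finite A \<Longrightarrow> (\<Sum>a\<in>A. length (occ_upto i a)) \<le> (\<Sum>k<i. length (fst (rs ! k)))"
proof (induction i)
  case 0 then show ?case by (simp add: occ_upto_def)
next
  case (Suc i)
  have "length (occ_upto (Suc i) a) = (if a \<in> body i then 1 else 0) + length (occ_upto i a)"
    for a by (simp add: occ_upto_def)
  moreover have "(\<Sum>a\<in>A. if a \<in> body i then 1 else 0 :: nat) = card (A \<inter> body i)"
    using Suc.prems by (simp add: sum.If_cases)
  ultimately have "(\<Sum>a\<in>A. length (occ_upto (Suc i) a)) =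
      card (A \<inter> body i) + (\<Sum>a\<in>A. length (occ_upto i a))"
    by (simp add: sum.distrib)
  moreover have "card (A \<inter> body i) \<le> length (fst (rs ! i))"
    using card_mono[of "body i" "A \<inter> body i"] card_length[of "fst (rs ! i)"]
    by (auto simp: body_def)
  ultimately show ?case using Suc by simp
qed

lemma rsize_rules_of: "rsize (rules_of rs) = init1_steps (length rs)"
proof -
  let ?g = "\<lambda>(as::'a list, q::'a). (set as, q)"
  have inj: "inj_on ?g (set rs)" and "distinct rs"
    using distinct_rules by (auto simp: distinct_map)
  have "rsize (rules_of rs) = (\<Sum>x\<in>set rs. card (fst (?g x)) + 1)"
    unfolding rsize_def rules_of_def by (simp add: sum.reindex[OF inj] comp_def)
  also have "\<dots> = (\<Sum>x\<leftarrow>rs. card (fst (?g x)) + 1)"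
    using \<open>distinct rs\<close> by (simp add: sum.distinct_set_conv_list)
  also have "\<dots> = (\<Sum>k<length rs. card (set (fst (rs ! k))) + 1)"
    by (simp add: sum_list_sum_nth atLeast0LessThan case_prod_beta)
  also have "\<dots> = init1_steps (length rs)"
    unfolding init1_steps_def by (rule sum.cong) (auto simp: distinct_card distinct_body_list)
  finally show ?thesis .
qed

lemma potential_loop_start_le: "potential loop_start \<le> init1_steps (length rs) + 2 * length qs + 1"
proof -
  have "potential loop_start = 1 + length (st_queue loop_start) + card {k. counted k}
      + ((\<Sum>a\<in>set qs. length (occ a)) + card (set qs))"
    by (simp add: potential_def loop_start_def sum_Suc)
  moreover have "length (st_queue loop_start) \<le> length qs" by (simp add: loop_start_def)
  moreover have "card {k. counted k} \<le> length rs"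
    using card_mono[of "{..<length rs}" "{k. counted k}"] by (auto simp: counted_upto_def)
  moreover have "(\<Sum>a\<in>set qs. length (occ a)) \<le> (\<Sum>k<length rs. length (fst (rs ! k)))"
    by (rule sum_length_occ_upto_le) simp
  moreover have "card (set qs) \<le> length qs" by (rule card_length)
  moreover have "init1_steps (length rs) = (\<Sum>k<length rs. length (fst (rs ! k))) + length rs"
    by (simp add: init1_steps_def sum_Suc)
  ultimately show ?thesis by linarith
qed

lemma run_computes_interior:
  assumes "card (set qs) \<le> rsize (rules_of rs)"
  shows "\<exists>n \<le> 5 * rsize (rules_of rs) + 5.
    st_phase (run qs rs X n) = Done \<and> st_Y (run qs rs X n) = interior (set qs) (rules_of rs) X"
proof -
  obtain n where n: "n \<le> potential loop_start" "st_phase ((step ^^ n) loop_start) = Done"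
    "st_Y ((step ^^ n) loop_start) = interior (set qs) (rules_of rs) X"
    using loop_terminates[OF loop_inv_loop_start] by blast
  define m where "m = init1_steps (length rs) + length qs + 2"
  have "run qs rs X (n + m) = (step ^^ n) (run qs rs X m)"
    unfolding run_def by (simp only: funpow_add comp_def)
  then have "run qs rs X (n + m) = (step ^^ n) loop_start"
    using run_loop_start by (simp add: m_def)
  moreover have "n + m \<le> 5 * rsize (rules_of rs) + 5"
    using n(1) potential_loop_start_le assms distinct_card[OF distinct_qs]
    unfolding m_def rsize_rules_of by linarith
  ultimately show ?thesis using n(2,3) by metis
qed

end

theorem theorem3p3:
  "\<exists>c::nat. \<forall>(qs :: 'a list) (rs :: ('a list \<times> 'a) list) (X :: 'a set).
     distinct qs \<and>
     (\<forall>(as, q) \<in> set rs. distinct as) \<and>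
     distinct (map (\<lambda>(as, q). (set as, q)) rs) \<and>
     (\<forall>r \<in> rules_of rs. rule_on (set qs) r) \<and>
     X \<subseteq> set qs \<and>
     rsize (rules_of rs) \<ge> card (set qs)
     \<longrightarrow> (\<exists>n \<le> c * rsize (rules_of rs) + c.
            st_phase (run qs rs X n) = Done \<and>
            st_Y (run qs rs X n) = interior (set qs) (rules_of rs) X)"
proof (rule exI[of _ 5], intro allI impI)
  fix qs :: "'a list" and rs :: "('a list \<times> 'a) list" and X :: "'a set"
  assume h: "distinct qs \<and> (\<forall>(as, q) \<in> set rs. distinct as) \<and>
    distinct (map (\<lambda>(as, q). (set as, q)) rs) \<and> (\<forall>r \<in> rules_of rs. rule_on (set qs) r) \<and>
    X \<subseteq> set qs \<and> rsize (rules_of rs) \<ge> card (set qs)"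
  then interpret rule_machine qs rs X by unfold_locales auto
  show "\<exists>n \<le> 5 * rsize (rules_of rs) + 5.
    st_phase (run qs rs X n) = Done \<and> st_Y (run qs rs X n) = interior (set qs) (rules_of rs) X"
    using run_computes_interior h by blast
qed

end
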